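(* Let $\mathcal{A}\in\mathbb{C}^{m\times m\times p}$ be a fixed Hermitian T-product tensor and let $\mathcal{X}\in\mathbb{C}^{m\times m\times p}$ be a random Hermitian T-product tensor such that $$\mathbb{E}\mathcal{X}=\mathcal{O}\quad\text{and}\quad\mathbb{E}(\mathcal{X}^k)\preceq\frac{k!}{2}\mathcal{A}^2\quad\text{for all }k=2,3,4,\dots.$$ Then for every $0<t<1$, $$\mathbb{E}e^{t\mathcal{X}}\preceq\exp\left(\frac{t^2\mathcal{A}^2}{2(1-t)}\right).$$
   Context: For $\mathcal{A}\in\mathbb{C}^{m\times n\times p}$ with frontal slices $A^{(1)},\dots,A^{(p)}$, $\mathrm{bcirc}(\mathcal{A})\in\mathbb{C}^{mp\times np}$ is the block circulant matrix whose $(r,s)$ block is $A^{(((r-s)\bmod p)+1)}$. The T-product $\mathcal{A}\star\mathcal{B}$ is the tensor with $\mathrm{bcirc}(\mathcal{A}\star\mathcal{B})=\mathrm{bcirc}(\mathcal{A})\mathrm{bcirc}(\mathcal{B})$; powers are T-product powers and $e^{\mathcal{A}}=\exp(\mathcal{A})=\sum_{k\ge0}\mathcal{A}^k/k!$ with $\mathcal{A}^0=\mathcal{I}$, the identity tensor (first frontal slice $I_m$, other slices zero). The conjugate transpose $\mathcal{A}^{\mathrm H}$ is obtained by conjugate-transposing every frontal slice and reversing the order of slices $2,\dots,p$; $\mathcal{A}$ is Hermitian if $\mathcal{A}^{\mathrm H}=\mathcal{A}$. For Hermitian $\mathcal{A},\mathcal{B}$, $\mathcal{A}\preceq\mathcal{B}$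 means $\mathrm{bcirc}(\mathcal{B}-\mathcal{A})$ is positive semidefinite; $\mathcal{O}$ is the zero tensor. Expectation is entrywise. *)

theory Defs
  imports "HOL-Probability.Probability" "Jordan_Normal_Form.Matrix"
begin

text \<open>A third-order tensor in C^(m x n x p) is represented by its entry function
  T i j k (row i < m, column j < n, frontal slice k < p, all 0-indexed).
  Entries outside the index range are irrelevant.\<close>
type_synonym tensor = "nat \<Rightarrow> nat \<Rightarrow> nat \<Rightarrow> complex"

text \<open>Block circulant matrix: block (r,s) (0-indexed) is frontal slice ((r - s) mod p).\<close>
definition bcirc :: "nat \<Rightarrow> nat \<Rightarrow> nat \<Rightarrow> tensor \<Rightarrow> complex mat" where
  "bcirc m n p T = mat (m * p) (n * p)
     (\<lambda>(i, j). T (i mod m) (j mod n) ((i div m + p - j div n) mod p))"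

text \<open>Inverse of bcirc: read off the first block column.\<close>
definition unbcirc :: "nat \<Rightarrow> nat \<Rightarrow> complex mat \<Rightarrow> tensor" where
  "unbcirc m p B = (\<lambda>i j k. B $$ (k * m + i, j))"

text \<open>T-product of A (m x n x p) and B (n x q x p): bcirc(A * B) = bcirc A * bcirc B.\<close>
definition tprod :: "nat \<Rightarrow> nat \<Rightarrow> nat \<Rightarrow> nat \<Rightarrow> tensor \<Rightarrow> tensor \<Rightarrow> tensor" where
  "tprod m n q p A B = unbcirc m p (bcirc m n p A * bcirc n q p B)"

definition tid :: tensor where
  "tid = (\<lambda>i j k. if k = 0 \<and> i = j then 1 else 0)"

fun tpow :: "nat \<Rightarrow> nat \<Rightarrow> tensor \<Rightarrow> nat \<Rightarrow> tensor" where
  "tpow m p A 0 = tid"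
| "tpow m p A (Suc k) = tprod m m m p (tpow m p A k) A"

definition tscale :: "real \<Rightarrow> tensor \<Rightarrow> tensor" where
  "tscale c A = (\<lambda>i j k. complex_of_real c * A i j k)"

definition tzero :: tensor where
  "tzero = (\<lambda>i j k. 0)"

definition texp :: "nat \<Rightarrow> nat \<Rightarrow> tensor \<Rightarrow> tensor" where
  "texp m p A = (\<lambda>i j k. (\<Sum>n. tpow m p A n i j k / of_nat (fact n)))"

text \<open>Conjugate transpose: conjugate-transpose every slice and reverse slices 2..p.\<close>
definition tH :: "nat \<Rightarrow> tensor \<Rightarrow> tensor" where
  "tH p A = (\<lambda>i j k. cnj (A j i ((p - k) mod p)))"

definition thermitian :: "nat \<Rightarrow> nat \<Rightarrow> tensor \<Rightarrow> bool" where
  "thermitian m p A \<longleftrightarrow> (\<forall>i<m. \<forall>j<m. \<forall>k<p. tH p A i j k = A i j k)"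

definition psd :: "nat \<Rightarrow> complex mat \<Rightarrow> bool" where
  "psd n M \<longleftrightarrow> M \<in> carrier_mat n n \<and>
     (\<forall>x \<in> carrier_vec n. let q = (\<Sum>i<n. \<Sum>j<n. cnj (x $ i) * M $$ (i, j) * x $ j)
                           in Im q = 0 \<and> Re q \<ge> 0)"

definition tle :: "nat \<Rightarrow> nat \<Rightarrow> tensor \<Rightarrow> tensor \<Rightarrow> bool" where
  "tle m p A B \<longleftrightarrow> psd (m * p) (bcirc m m p (\<lambda>i j k. B i j k - A i j k))"

definition texpect :: "'a measure \<Rightarrow> ('a \<Rightarrow> tensor) \<Rightarrow> tensor" where
  "texpect M X = (\<lambda>i j k. integral\<^sup>L M (\<lambda>\<omega>. X \<omega> i j k))"

end

theory Submission
  imports Defs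
begin

text \<open>Applying \<^const>\<open>bcirc\<close> turns T-products, powers, exponentials, conjugate transposes
  and the Loewner order of \<open>m \<times> m \<times> p\<close> tensors into the corresponding notions for
  \<open>mp \<times> mp\<close> matrices, so it suffices to prove the statement for a random Hermitian matrix \<open>X\<close>.
  Expanding the exponential and using \<open>E X = 0\<close>,
  \<open>E exp(tX) = I + \<Sum>k\<ge>2. t^k/k! E X^k \<preceq> I + \<Sum>k\<ge>2. t^k/2 A^2 = I + s A^2 \<preceq> exp(s A^2)\<close>
  with \<open>s = t^2/(2(1-t))\<close>, where the last step holds because every power \<open>A^(2k)\<close> is positive
  semidefinite. Expectation and series may be exchanged by dominated convergence: for Hermitian
  \<open>X\<close>, \<open>|(X^(j+k))_ab| \<le> ((X^(2j))_aa + (X^(2k))_bb)/2\<close>, and the moment hypothesis bounds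
  \<open>E (X^(2j))_aa\<close> by \<open>(2j)!\<close> times a constant, so \<open>E |(X^n)_ab| \<le> (n+1)! K\<close>.\<close>

section \<open>Square matrices as entry functions\<close>

text \<open>An \<open>N \<times> N\<close> matrix is represented by its entry function; entries with an index
  \<open>\<ge> N\<close> are irrelevant.\<close>

definition mmult :: "nat \<Rightarrow> (nat \<Rightarrow> nat \<Rightarrow> 'a::comm_semiring_1) \<Rightarrow> (nat \<Rightarrow> nat \<Rightarrow> 'a) \<Rightarrow> nat \<Rightarrow> nat \<Rightarrow> 'a"
  where "mmult N F G a b = (\<Sum>c<N. F a c * G c b)"

fun mpower :: "nat \<Rightarrow> (nat \<Rightarrow> nat \<Rightarrow> 'a::comm_semiring_1) \<Rightarrow> nat \<Rightarrow> nat \<Rightarrow> nat \<Rightarrow> 'a" where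
  "mpower N F 0 = (\<lambda>a b. if a = b then 1 else 0)"
| "mpower N F (Suc n) = mmult N (mpower N F n) F"

definition mexp :: "nat \<Rightarrow> (nat \<Rightarrow> nat \<Rightarrow> complex) \<Rightarrow> nat \<Rightarrow> nat \<Rightarrow> complex"
  where "mexp N F a b = (\<Sum>n. mpower N F n a b / of_nat (fact n))"

definition herm :: "nat \<Rightarrow> (nat \<Rightarrow> nat \<Rightarrow> complex) \<Rightarrow> bool"
  where "herm N F \<longleftrightarrow> (\<forall>a<N. \<forall>b<N. F b a = cnj (F a b))"

definition qform :: "nat \<Rightarrow> (nat \<Rightarrow> nat \<Rightarrow> complex) \<Rightarrow> (nat \<Rightarrow> complex) \<Rightarrow> complex"
  where "qform N F x = (\<Sum>a<N. \<Sum>b<N. cnj (x a) * F a b * x b)"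

text \<open>The order on \<^typ>\<open>complex\<close> is \<open>z \<le> w \<longleftrightarrow> Re z \<le> Re w \<and> Im z = Im w\<close>, so this says that
  every \<open>x\<^sup>H (G - F) x\<close> is real and nonnegative.\<close>

definition loewner_le :: "nat \<Rightarrow> (nat \<Rightarrow> nat \<Rightarrow> complex) \<Rightarrow> (nat \<Rightarrow> nat \<Rightarrow> complex) \<Rightarrow> bool"
  where "loewner_le N F G \<longleftrightarrow> (\<forall>x. qform N F x \<le> qform N G x)"

lemma mmult_assoc: "mmult N (mmult N F G) H a b = mmult N F (mmult N G H) a b"
  unfolding mmult_def sum_distrib_left sum_distrib_right
  by (subst sum.swap) (simp add: mult.assoc)

lemma mmult_id_left: "a < N \<Longrightarrow> mmult N (\<lambda>a b. if a = b then 1 else 0) F a b = F a b"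
  unfolding mmult_def by (simp add: of_bool_def[symmetric])

lemma mmult_id_right: "b < N \<Longrightarrow> mmult N F (\<lambda>a b. if a = b then 1 else 0) a b = F a b"
  unfolding mmult_def by (simp add: of_bool_def[symmetric])

lemma mpower_1: "a < N \<Longrightarrow> mpower N F 1 a b = F a b"
  by (simp add: mmult_id_left)

lemma mpower_add: "b < N \<Longrightarrow> mpower N F (j + k) a b = mmult N (mpower N F j) (mpower N F k) a b"
proof (induction k arbitrary: b)
  case 0
  then show ?case by (simp add: mmult_id_right)
next
  case (Suc k)
  have "mpower N F (j + Suc k) a b = mmult N (mmult N (mpower N F j) (mpower N F k)) F a b"
    unfolding mmult_def[of N "mpower N F (j + k)"] by (simp add: Suc.IH mmult_def)
  also have "\<dots> = mmult N (mpower N F j) (mpower N F (Suc k)) a b"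
    by (simp add: mmult_assoc)
  finally show ?case .
qed

lemma mpower_Suc_left:
  assumes "a < N" "b < N"
  shows "mpower N F (Suc n) a b = mmult N F (mpower N F n) a b"
proof -
  have "mpower N F (Suc n) a b = mmult N (mpower N F 1) (mpower N F n) a b"
    using mpower_add[OF assms(2), of F 1 n a] by (simp only: plus_1_eq_Suc)
  then show ?thesis by (simp only: mmult_def mpower_1[OF assms(1)])
qed

lemma mpower_mult: "b < N \<Longrightarrow> mpower N (mpower N F j) n a b = mpower N F (j * n) a b"
proof (induction n arbitrary: b)
  case 0
  then show ?case by simp
next
  case (Suc n)
  have "mpower N (mpower N F j) (Suc n) a b = mmult N (mpower N F (j * n)) (mpower N F j) a b"
    by (simp add: mmult_def Suc.IH)
  also have "\<dots> = mpower N F (j * Suc n) a b"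
    using mpower_add[OF Suc.prems, of F "j * n" j] by (simp add: add.commute)
  finally show ?case .
qed

lemma mpower_scale: "mpower N (\<lambda>a b. c * F a b) n a b = c ^ n * mpower N F n a b"
  by (induction n arbitrary: b) (simp_all add: mmult_def sum_distrib_left mult_ac)

lemma mpower_cong:
  assumes "\<And>a b. a < N \<Longrightarrow> b < N \<Longrightarrow> F a b = G a b" "b < N"
  shows "mpower N F n a b = mpower N G n a b"
  using assms(2) by (induction n arbitrary: b) (simp_all add: mmult_def assms(1))

lemma mexp_cong:
  assumes "\<And>a b. a < N \<Longrightarrow> b < N \<Longrightarrow> F a b = G a b" "b < N"
  shows "mexp N F a b = mexp N G a b"
  unfolding mexp_def using mpower_cong[OF assms] by simp

lemma herm_mpower:
  assumes "herm N F"
  shows "herm N (mpower N F n)"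
proof (induction n)
  case 0
  then show ?case by (simp add: herm_def)
next
  case (Suc n)
  show ?case unfolding herm_def
  proof (intro allI impI)
    fix a b assume ab: "a < N" "b < N"
    have "mpower N F (Suc n) b a = (\<Sum>c<N. mpower N F n b c * F c a)"
      by (simp add: mmult_def)
    also have "\<dots> = (\<Sum>c<N. cnj (F a c * mpower N F n c b))"
    proof (rule sum.cong[OF refl])
      fix c assume "c \<in> {..<N}"
      then have "mpower N F n b c = cnj (mpower N F n c b)" "F c a = cnj (F a c)"
        using Suc assms ab unfolding herm_def by blast+
      then show "mpower N F n b c * F c a = cnj (F a c * mpower N F n c b)"
        by (simp add: mult.commute)
    qed
    also have "\<dots> = cnj (mpower N F (Suc n) a b)"
      unfolding mpower_Suc_left[OF ab] mmult_def by simp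
    finally show "mpower N F (Suc n) b a = cnj (mpower N F (Suc n) a b)" .
  qed
qed

lemma mmult_self_diag:
  assumes "herm N P" "a < N"
  shows "mmult N P P a a = of_real (\<Sum>c<N. (norm (P a c))\<^sup>2)"
  unfolding mmult_def of_real_sum
proof (rule sum.cong[OF refl])
  fix c assume "c \<in> {..<N}"
  then have "P c a = cnj (P a c)" using assms unfolding herm_def by blast
  then show "P a c * P c a = of_real ((norm (P a c))\<^sup>2)" by (simp only: complex_norm_square)
qed

lemma norm_mmult_le:
  assumes "herm N P" "herm N Q" "a < N" "b < N"
  shows "norm (mmult N P Q a b) \<le> (Re (mmult N P P a a) + Re (mmult N Q Q b b)) / 2"
proof -
  have "norm (Q c b) = norm (Q b c)" if "c < N" for c
    using assms(2,4) that unfolding herm_def by (metis complex_mod_cnj)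
  then have "norm (mmult N P Q a b) \<le> (\<Sum>c<N. norm (P a c) * norm (Q b c))"
    unfolding mmult_def by (intro order_trans[OF norm_sum] sum_mono) (simp add: norm_mult)
  also have "\<dots> \<le> (\<Sum>c<N. ((norm (P a c))\<^sup>2 + (norm (Q b c))\<^sup>2) / 2)"
  proof (rule sum_mono)
    fix c
    show "norm (P a c) * norm (Q b c) \<le> ((norm (P a c))\<^sup>2 + (norm (Q b c))\<^sup>2) / 2"
      using sum_squares_bound[of "norm (P a c)" "norm (Q b c)"] by simp
  qed
  also have "\<dots> = (Re (mmult N P P a a) + Re (mmult N Q Q b b)) / 2"
    using assms by (simp add: mmult_self_diag sum.distrib sum_divide_distrib add_divide_distrib)
  finally show ?thesis .
qed

lemma norm_mpower_le:
  assumes "herm N F" "a < N" "b < N"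
  shows "norm (mpower N F n a b)
           \<le> (Re (mpower N F (2 * (n div 2)) a a) + Re (mpower N F (2 * (n - n div 2)) b b)) / 2"
proof -
  define j k where "j = n div 2" and "k = n - n div 2"
  have "mpower N F n a b = mmult N (mpower N F j) (mpower N F k) a b"
    using mpower_add[OF assms(3), of F j k a] by (simp add: j_def k_def)
  moreover have "mpower N F (2 * i) c c = mmult N (mpower N F i) (mpower N F i) c c"
    if "c < N" for i c
    using mpower_add[OF that, of F i i c] by (simp add: mult_2)
  ultimately show ?thesis
    using norm_mmult_le[OF herm_mpower herm_mpower, OF assms(1) assms(1) assms(2,3)] assms(2,3)
    by (simp add: j_def k_def)
qed

lemma norm_mpower_le_power:
  fixes F :: "nat \<Rightarrow> nat \<Rightarrow> complex"
  assumes "\<And>c d. c < N \<Longrightarrow> d < N \<Longrightarrow> norm (F c d) \<le> K" "b < N"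
  shows "norm (mpower N F n a b) \<le> (real N * K) ^ n"
  using assms(2)
proof (induction n arbitrary: b)
  case 0
  then show ?case by simp
next
  case (Suc n)
  have "norm (mpower N F (Suc n) a b) \<le> (\<Sum>c<N. norm (mpower N F n a c) * norm (F c b))"
    unfolding mpower.simps mmult_def by (rule order_trans[OF norm_sum]) (simp add: norm_mult)
  also have "\<dots> \<le> (\<Sum>c<N. (real N * K) ^ n * K)"
    using Suc assms(1) by (intro sum_mono mult_mono) (auto intro: order_trans[OF norm_ge_zero])
  finally show ?case by (simp add: mult_ac)
qed

lemma summable_exp_series_mpower:
  fixes F :: "nat \<Rightarrow> nat \<Rightarrow> complex"
  assumes "b < N" "0 \<le> r"
  shows "summable (\<lambda>n. r ^ n / fact n * norm (mpower N F n a b))"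
proof (rule summable_comparison_test')
  define K where "K = (\<Sum>c<N. \<Sum>d<N. norm (F c d))"
  have "norm (F c d) \<le> K" if "c < N" "d < N" for c d
    unfolding K_def using that
    by (intro order_trans[OF member_le_sum[of d] member_le_sum[of c]]) (auto intro: sum_nonneg)
  then have "norm (mpower N F n a b) \<le> (real N * K) ^ n" for n
    using assms(1) by (rule norm_mpower_le_power)
  then show "norm (r ^ n / fact n * norm (mpower N F n a b)) \<le> (r * (real N * K)) ^ n /\<^sub>R fact n" for n
    using assms(2) by (auto simp: power_mult_distrib divide_simps intro!: mult_left_mono)
  show "summable (\<lambda>n. (r * (real N * K)) ^ n /\<^sub>R fact n)"
    by (rule summable_exp_generic)
qed

lemma qform_cong:
  "(\<And>a b. a < N \<Longrightarrow> b < N \<Longrightarrow> F a b = G a b) \<Longrightarrow> qform N F x = qform N G x"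
  unfolding qform_def by (intro sum.cong refl) auto

lemma qform_scale: "qform N (\<lambda>a b. c * F a b) x = c * qform N F x"
  by (simp add: qform_def sum_distrib_left mult_ac)

lemma qform_add: "qform N (\<lambda>a b. F a b + G a b) x = qform N F x + qform N G x"
  by (simp add: qform_def algebra_simps sum.distrib)

lemma qform_scaleR: "qform N (\<lambda>a b. c *\<^sub>R F a b) x = c *\<^sub>R qform N F x"
  by (simp add: scaleR_conv_of_real qform_scale)

lemma qform_sums:
  "(\<And>a b. a < N \<Longrightarrow> b < N \<Longrightarrow> (\<lambda>n. F n a b) sums G a b)
    \<Longrightarrow> (\<lambda>n. qform N (F n) x) sums qform N G x"
  unfolding qform_def by (intro sums_sum sums_mult sums_mult2) auto

lemma qform_unit_vector: "a < N \<Longrightarrow> qform N F (\<lambda>i. if i = a then 1 else 0) = F a a"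
  unfolding qform_def
  by (simp add: if_distrib[where f=cnj] if_distrib[where f="\<lambda>z. z * _"]
      if_distrib[where f="\<lambda>z. _ * z"] cong: if_cong)

lemma diag_le_if_loewner_le: "loewner_le N F G \<Longrightarrow> a < N \<Longrightarrow> F a a \<le> G a a"
  unfolding loewner_le_def by (metis qform_unit_vector)

lemma loewner_le_cong:
  assumes "\<And>a b. a < N \<Longrightarrow> b < N \<Longrightarrow> F a b = F' a b"
    and "\<And>a b. a < N \<Longrightarrow> b < N \<Longrightarrow> G a b = G' a b"
  shows "loewner_le N F G \<longleftrightarrow> loewner_le N F' G'"
  unfolding loewner_le_def using qform_cong[of N F F'] qform_cong[of N G G'] assms by simp

lemma loewner_le_trans: "loewner_le N F G \<Longrightarrow> loewner_le N G H \<Longrightarrow> loewner_le N F H"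
  unfolding loewner_le_def by (meson order_trans)

lemma qform_mmult_self:
  assumes "herm N P"
  shows "qform N (mmult N P P) x = of_real (\<Sum>c<N. (norm (\<Sum>b<N. P c b * x b))\<^sup>2)"
proof -
  have "qform N (mmult N P P) x = (\<Sum>a<N. \<Sum>b<N. \<Sum>c<N. cnj (x a) * P a c * (P c b * x b))"
    unfolding qform_def mmult_def by (simp add: sum_distrib_left sum_distrib_right mult.assoc)
  also have "\<dots> = (\<Sum>a<N. \<Sum>c<N. \<Sum>b<N. cnj (x a) * P a c * (P c b * x b))"
    by (rule sum.cong[OF refl], rule sum.swap)
  also have "\<dots> = (\<Sum>c<N. \<Sum>a<N. \<Sum>b<N. cnj (x a) * P a c * (P c b * x b))"
    by (rule sum.swap)
  also have "\<dots> = (\<Sum>c<N. (\<Sum>a<N. cnj (x a) * P a c) * (\<Sum>b<N. P c b * x b))"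
    by (simp add: sum_product)
  also have "\<dots> = (\<Sum>c<N. cnj (\<Sum>b<N. P c b * x b) * (\<Sum>b<N. P c b * x b))"
  proof (intro sum.cong refl arg_cong2[where f=times])
    fix c assume "c \<in> {..<N}"
    have term_eq: "cnj (x a) * P a c = cnj (P c a * x a)" if "a \<in> {..<N}" for a
    proof -
      have "P a c = cnj (P c a)" using assms that \<open>c \<in> {..<N}\<close> unfolding herm_def by blast
      then show ?thesis by (simp add: mult.commute)
    qed
    then show "(\<Sum>a<N. cnj (x a) * P a c) = cnj (\<Sum>b<N. P c b * x b)"
      by (simp only: cnj_sum) (rule sum.cong[OF refl term_eq])
  qed
  also have "\<dots> = of_real (\<Sum>c<N. (norm (\<Sum>b<N. P c b * x b))\<^sup>2)"
    by (simp only: of_real_sum complex_norm_square mult.commute)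
  finally show ?thesis .
qed

lemma qform_mpower_even_nonneg:
  assumes "herm N F"
  shows "0 \<le> qform N (mpower N F (2 * j)) x"
proof -
  have "qform N (mpower N F (2 * j)) x = qform N (mmult N (mpower N F j) (mpower N F j)) x"
    by (rule qform_cong) (simp add: mpower_add[symmetric] mult_2)
  then show ?thesis
    by (simp add: qform_mmult_self[OF herm_mpower[OF assms]] less_eq_complex_def sum_nonneg)
qed

lemma sums_le_complex:
  fixes f g :: "nat \<Rightarrow> complex"
  assumes le: "\<And>n. f n \<le> g n" and "f sums a" "g sums b"
  shows "a \<le> b"
proof -
  have Re: "(\<lambda>n. Re (f n)) sums Re a" "(\<lambda>n. Re (g n)) sums Re b"
    and Im: "(\<lambda>n. Im (f n)) sums Im a" "(\<lambda>n. Im (g n)) sums Im b"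
    using assms(2,3) by (simp_all add: sums_complex_iff)
  have Re_le: "Re (f n) \<le> Re (g n)" and Im_eq: "Im (g n) = Im (f n)" for n
    using le[of n] by (simp_all add: less_eq_complex_def)
  have "Re a \<le> Re b" by (rule sums_le[OF Re_le Re])
  moreover have "Im a = Im b"
    using Im unfolding Im_eq by (rule sums_unique2)
  ultimately show ?thesis by (simp add: less_eq_complex_def)
qed
lemma moment_series_le:
  fixes u :: "nat \<Rightarrow> complex" and t :: real
  assumes sums: "(\<lambda>n. (t ^ n / fact n) *\<^sub>R u n) sums L"
    and "u 1 = 0" and moments: "\<And>n. 2 \<le> n \<Longrightarrow> u n \<le> (fact n / 2) *\<^sub>R d"
    and "0 \<le> t" "t < 1"
  shows "L \<le> u 0 + (t\<^sup>2 / (2 * (1 - t))) *\<^sub>R d"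
proof -
  have tail: "(\<lambda>n. (t ^ (n + 2) / fact (n + 2)) *\<^sub>R u (n + 2)) sums (L - u 0)"
    using sums_split_initial_segment[OF sums, of 2] \<open>u 1 = 0\<close> by (simp add: numeral_2_eq_2)
  have geometric: "(\<lambda>n. (t ^ (n + 2) / 2) *\<^sub>R d) sums ((t\<^sup>2 / (2 * (1 - t))) *\<^sub>R d)"
  proof -
    have "(\<lambda>n. t\<^sup>2 / 2 * t ^ n) sums (t\<^sup>2 / 2 * (1 / (1 - t)))"
      using assms(4,5) by (intro sums_mult geometric_sums) simp
    then have "(\<lambda>n. t ^ (n + 2) / 2) sums (t\<^sup>2 / (2 * (1 - t)))"
      by (simp add: power_add power2_eq_square mult_ac)
    then show ?thesis by (rule sums_scaleR_left)
  qed
  have "(t ^ (n + 2) / fact (n + 2)) *\<^sub>R u (n + 2) \<le> (t ^ (n + 2) / 2) *\<^sub>R d" for n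
  proof -
    have "(t ^ (n + 2) / fact (n + 2)) *\<^sub>R u (n + 2)
        \<le> (t ^ (n + 2) / fact (n + 2)) *\<^sub>R ((fact (n + 2) / 2) *\<^sub>R d)"
      using moments[of "n + 2"] \<open>0 \<le> t\<close> by (intro scaleR_left_mono) auto
    also have "\<dots> = (t ^ (n + 2) / 2) *\<^sub>R d"
      by simp
    finally show ?thesis .
  qed
  then have "L - u 0 \<le> (t\<^sup>2 / (2 * (1 - t))) *\<^sub>R d"
    using tail geometric by (rule sums_le_complex)
  then show ?thesis by (simp add: diff_le_eq add.commute)
qed

lemma exp_series_ge:
  fixes v :: "nat \<Rightarrow> complex" and s :: real
  assumes sums: "(\<lambda>n. (s ^ n / fact n) *\<^sub>R v n) sums R"
    and nonneg: "\<And>n. 2 \<le> n \<Longrightarrow> 0 \<le> v n" and "0 \<le> s"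
  shows "v 0 + s *\<^sub>R v 1 \<le> R"
proof -
  have tail: "(\<lambda>n. (s ^ (n + 2) / fact (n + 2)) *\<^sub>R v (n + 2)) sums (R - (v 0 + s *\<^sub>R v 1))"
    using sums_split_initial_segment[OF sums, of 2] by (simp add: numeral_2_eq_2)
  have "0 \<le> (s ^ (n + 2) / fact (n + 2)) *\<^sub>R v (n + 2)" for n
    using nonneg[of "n + 2"] \<open>0 \<le> s\<close> by (intro scaleR_nonneg_nonneg) auto
  then have "0 \<le> R - (v 0 + s *\<^sub>R v 1)"
    using sums_zero tail by (rule sums_le_complex)
  then show ?thesis by simp
qed

section \<open>The matrix inequality\<close>

lemma integral_norm_mpower_le:
  fixes B :: "'a \<Rightarrow> nat \<Rightarrow> nat \<Rightarrow> complex"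
  assumes herm: "\<And>\<omega>. \<omega> \<in> space M \<Longrightarrow> herm N (B \<omega>)"
    and integrable: "\<And>n a b. a < N \<Longrightarrow> b < N \<Longrightarrow> integrable M (\<lambda>\<omega>. mpower N (B \<omega>) n a b)"
    and diag: "\<And>j a. a < N \<Longrightarrow> Re (LINT \<omega>|M. mpower N (B \<omega>) (2 * j) a a) \<le> fact (2 * j) * K"
    and "0 \<le> K" "a < N" "b < N"
  shows "(LINT \<omega>|M. norm (mpower N (B \<omega>) n a b)) \<le> fact (Suc n) * K"
proof -
  define j k where "j = n div 2" and "k = n - n div 2"
  have integrable_Re_diag: "integrable M (\<lambda>\<omega>. Re (mpower N (B \<omega>) i c c))" if "c < N" for i c
    using integrable[OF that that] by (rule integrable_Re)
  have "(LINT \<omega>|M. norm (mpower N (B \<omega>) n a b))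
      \<le> (LINT \<omega>|M. (Re (mpower N (B \<omega>) (2 * j) a a) + Re (mpower N (B \<omega>) (2 * k) b b)) / 2)"
  proof (rule integral_mono)
    show "integrable M (\<lambda>\<omega>. norm (mpower N (B \<omega>) n a b))"
      using assms(5,6) by (intro integrable_norm integrable)
    show "integrable M (\<lambda>\<omega>. (Re (mpower N (B \<omega>) (2 * j) a a) + Re (mpower N (B \<omega>) (2 * k) b b)) / 2)"
      using integrable_Re_diag[OF assms(5)] integrable_Re_diag[OF assms(6)] by simp
  qed (use norm_mpower_le[OF herm] assms(5,6) in \<open>simp add: j_def k_def\<close>)
  also have "\<dots> = (Re (LINT \<omega>|M. mpower N (B \<omega>) (2 * j) a a)
                  + Re (LINT \<omega>|M. mpower N (B \<omega>) (2 * k) b b)) / 2"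
    using assms(5,6) by (simp add: integrable)
  also have "\<dots> \<le> (fact (2 * j) * K + fact (2 * k) * K) / 2"
    using diag assms(5,6) by (intro divide_right_mono add_mono) auto
  also have "\<dots> \<le> (fact (Suc n) * K + fact (Suc n) * K) / 2"
    unfolding j_def k_def using \<open>0 \<le> K\<close>
    by (intro divide_right_mono add_mono mult_right_mono fact_mono) auto
  also have "\<dots> = fact (Suc n) * K"
    by simp
  finally show ?thesis .
qed

lemma integral_mexp_sums:
  fixes B :: "'a \<Rightarrow> nat \<Rightarrow> nat \<Rightarrow> complex"
  assumes integrable: "\<And>n. integrable M (\<lambda>\<omega>. mpower N (B \<omega>) n a b)"
    and moments: "\<And>n. (LINT \<omega>|M. norm (mpower N (B \<omega>) n a b)) \<le> fact (Suc n) * K"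
    and "0 \<le> t" "t < 1" "b < N"
  shows "(\<lambda>n. (t ^ n / fact n) *\<^sub>R (LINT \<omega>|M. mpower N (B \<omega>) n a b))
           sums (LINT \<omega>|M. mexp N (\<lambda>a b. of_real t * B \<omega> a b) a b)"
proof -
  define f where "f n \<omega> = (t ^ n / fact n) *\<^sub>R mpower N (B \<omega>) n a b" for n \<omega>
  have mexp_eq: "mexp N (\<lambda>a b. of_real t * B \<omega> a b) a b = (\<Sum>n. f n \<omega>)" for \<omega>
    by (simp add: mexp_def mpower_scale f_def scaleR_conv_of_real)
  have norm_f: "norm (f n \<omega>) = t ^ n / fact n * norm (mpower N (B \<omega>) n a b)" for n \<omega>
    using \<open>0 \<le> t\<close> by (simp add: f_def)
  have bound: "(LINT \<omega>|M. norm (f n \<omega>)) \<le> K * (real (Suc n) * t ^ n)" for n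
  proof -
    have "(LINT \<omega>|M. norm (f n \<omega>)) \<le> t ^ n / fact n * (fact (Suc n) * K)"
      unfolding norm_f integral_mult_right_zero using \<open>0 \<le> t\<close> by (intro mult_left_mono moments) simp
    also have "\<dots> = K * (real (Suc n) * t ^ n)"
      by (simp add: field_simps)
    finally show ?thesis .
  qed
  have "summable (\<lambda>n. LINT \<omega>|M. norm (f n \<omega>))"
  proof (rule summable_comparison_test')
    show "summable (\<lambda>n. K * (real (Suc n) * t ^ n))"
      using \<open>0 \<le> t\<close> \<open>t < 1\<close>
      by (intro summable_mult sums_summable[OF geometric_deriv_sums]) simp
    show "norm (LINT \<omega>|M. norm (f n \<omega>)) \<le> K * (real (Suc n) * t ^ n)" for n
      using bound[of n] by (simp add: integral_nonneg)
  qed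
  moreover have "AE \<omega> in M. summable (\<lambda>n. norm (f n \<omega>))"
    unfolding norm_f using summable_exp_series_mpower \<open>b < N\<close> \<open>0 \<le> t\<close> by simp
  moreover have "integrable M (f n)" for n
    unfolding f_def using integrable by simp
  ultimately have "(\<lambda>n. LINT \<omega>|M. f n \<omega>) sums (LINT \<omega>|M. (\<Sum>n. f n \<omega>))"
    by (intro sums_integral)
  then show ?thesis
    by (simp add: f_def mexp_eq)
qed

lemma mexp_scale_sums:
  assumes "b < N" "0 \<le> s"
  shows "(\<lambda>n. (s ^ n / fact n) *\<^sub>R mpower N F n a b) sums mexp N (\<lambda>a b. of_real s * F a b) a b"
proof -
  have "summable (\<lambda>n. norm ((s ^ n / fact n) *\<^sub>R mpower N F n a b))"
    using summable_exp_series_mpower[OF assms, of F a] assms(2) by simp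
  then show ?thesis
    by (simp add: mexp_def mpower_scale scaleR_conv_of_real summable_sums summable_norm_cancel)
qed

lemma expectation_mpower_even_diag_le:
  fixes B :: "'a \<Rightarrow> nat \<Rightarrow> nat \<Rightarrow> complex"
  assumes "prob_space M"
    and moments: "\<And>k. 2 \<le> k \<Longrightarrow> loewner_le N (\<lambda>a b. LINT \<omega>|M. mpower N (B \<omega>) k a b)
                                        (\<lambda>a b. of_real (fact k / 2) * D a b)"
    and "a < N"
  shows "Re (LINT \<omega>|M. mpower N (B \<omega>) (2 * j) a a) \<le> fact (2 * j) * (1 + (\<Sum>c<N. norm (D c c)))"
proof (cases j)
  case 0
  then show ?thesis
    using prob_space.prob_space[OF assms(1)] by (simp add: sum_nonneg)
next
  case (Suc i)
  have "Re (LINT \<omega>|M. mpower N (B \<omega>) (2 * j) a a) \<le> fact (2 * j) / 2 * Re (D a a)"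
    using diag_le_if_loewner_le[OF moments \<open>a < N\<close>, of "2 * j"] Suc
    by (simp add: less_eq_complex_def)
  also have "\<dots> \<le> fact (2 * j) / 2 * (1 + (\<Sum>c<N. norm (D c c)))"
    using member_le_sum[of a "{..<N}" "\<lambda>c. norm (D c c)"] \<open>a < N\<close>
    by (intro mult_left_mono order_trans[OF complex_Re_le_cmod]) auto
  also have "\<dots> \<le> fact (2 * j) * (1 + (\<Sum>c<N. norm (D c c)))"
    by (simp add: sum_nonneg)
  finally show ?thesis .
qed

lemma loewner_le_expectation_mexp:
  fixes B :: "'a \<Rightarrow> nat \<Rightarrow> nat \<Rightarrow> complex"
  assumes "prob_space M"
    and herm_B: "\<And>\<omega>. \<omega> \<in> space M \<Longrightarrow> herm N (B \<omega>)"
    and integrable: "\<And>n a b. a < N \<Longrightarrow> b < N \<Longrightarrow> integrable M (\<lambda>\<omega>. mpower N (B \<omega>) n a b)"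
    and mean_zero: "\<And>a b. a < N \<Longrightarrow> b < N \<Longrightarrow> (LINT \<omega>|M. B \<omega> a b) = 0"
    and moments: "\<And>k. 2 \<le> k \<Longrightarrow> loewner_le N (\<lambda>a b. LINT \<omega>|M. mpower N (B \<omega>) k a b)
                                        (\<lambda>a b. of_real (fact k / 2) * D a b)"
    and "0 \<le> t" "t < 1"
  shows "loewner_le N (\<lambda>a b. LINT \<omega>|M. mexp N (\<lambda>a b. of_real t * B \<omega> a b) a b)
                      (\<lambda>a b. (if a = b then 1 else 0) + of_real (t\<^sup>2 / (2 * (1 - t))) * D a b)"
  unfolding loewner_le_def
proof
  fix x
  interpret prob_space M by fact
  define E where "E n = (\<lambda>a b. LINT \<omega>|M. mpower N (B \<omega>) n a b)" for n
  define K where "K = 1 + (\<Sum>c<N. norm (D c c))"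
  have "(LINT \<omega>|M. norm (mpower N (B \<omega>) n a b)) \<le> fact (Suc n) * K" if "a < N" "b < N" for n a b
    using that expectation_mpower_even_diag_le[OF assms(1) moments]
    by (intro integral_norm_mpower_le herm_B integrable) (auto simp: K_def sum_nonneg)
  then have "(\<lambda>n. (t ^ n / fact n) *\<^sub>R E n a b)
      sums (LINT \<omega>|M. mexp N (\<lambda>a b. of_real t * B \<omega> a b) a b)" if "a < N" "b < N" for a b
    unfolding E_def using that \<open>0 \<le> t\<close> \<open>t < 1\<close> by (intro integral_mexp_sums integrable) auto
  then have "(\<lambda>n. qform N (\<lambda>a b. (t ^ n / fact n) *\<^sub>R E n a b) x)
      sums qform N (\<lambda>a b. LINT \<omega>|M. mexp N (\<lambda>a b. of_real t * B \<omega> a b) a b) x"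
    by (rule qform_sums)
  then have "(\<lambda>n. (t ^ n / fact n) *\<^sub>R qform N (E n) x)
      sums qform N (\<lambda>a b. LINT \<omega>|M. mexp N (\<lambda>a b. of_real t * B \<omega> a b) a b) x"
    by (simp only: qform_scaleR)
  then have "qform N (\<lambda>a b. LINT \<omega>|M. mexp N (\<lambda>a b. of_real t * B \<omega> a b) a b) x
      \<le> qform N (E 0) x + (t\<^sup>2 / (2 * (1 - t))) *\<^sub>R qform N D x"
  proof (rule moment_series_le[OF _ _ _ \<open>0 \<le> t\<close> \<open>t < 1\<close>])
    have "qform N (E 1) x = qform N (\<lambda>a b. 0) x"
      by (rule qform_cong) (simp only: E_def mpower_1 mean_zero)
    then show "qform N (E 1) x = 0"
      by (simp add: qform_def)
    show "qform N (E n) x \<le> (fact n / 2) *\<^sub>R qform N D x" if "2 \<le> n" for n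
    proof -
      have "qform N (E n) x \<le> qform N (\<lambda>a b. of_real (fact n / 2) * D a b) x"
        using moments[OF that] unfolding loewner_le_def E_def by blast
      then show ?thesis by (simp only: qform_scale scaleR_conv_of_real)
    qed
  qed
  moreover have "E 0 = (\<lambda>a b. if a = b then 1 else 0)"
    by (simp add: E_def fun_eq_iff prob_space)
  ultimately show "qform N (\<lambda>a b. LINT \<omega>|M. mexp N (\<lambda>a b. of_real t * B \<omega> a b) a b) x
      \<le> qform N (\<lambda>a b. (if a = b then 1 else 0) + of_real (t\<^sup>2 / (2 * (1 - t))) * D a b) x"
    by (simp only: qform_add qform_scale scaleR_conv_of_real)
qed

lemma loewner_le_id_plus_mexp:
  assumes "herm N C" "0 \<le> s"
  shows "loewner_le N (\<lambda>a b. (if a = b then 1 else 0) + of_real s * mpower N C 2 a b)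
                      (mexp N (\<lambda>a b. of_real s * mpower N C 2 a b))"
  unfolding loewner_le_def
proof
  fix x
  define D where "D = mpower N C 2"
  have "(\<lambda>n. qform N (\<lambda>a b. (s ^ n / fact n) *\<^sub>R mpower N D n a b) x)
      sums qform N (mexp N (\<lambda>a b. of_real s * D a b)) x"
    using \<open>0 \<le> s\<close> by (intro qform_sums mexp_scale_sums)
  then have "(\<lambda>n. (s ^ n / fact n) *\<^sub>R qform N (mpower N D n) x)
      sums qform N (mexp N (\<lambda>a b. of_real s * D a b)) x"
    by (simp only: qform_scaleR)
  then have "qform N (mpower N D 0) x + s *\<^sub>R qform N (mpower N D 1) x
      \<le> qform N (mexp N (\<lambda>a b. of_real s * D a b)) x"
  proof (rule exp_series_ge[OF _ _ \<open>0 \<le> s\<close>])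
    show "0 \<le> qform N (mpower N D n) x" if "2 \<le> n" for n
    proof -
      have "qform N (mpower N D n) x = qform N (mpower N C (2 * n)) x"
        unfolding D_def by (intro qform_cong mpower_mult)
      then show ?thesis using qform_mpower_even_nonneg[OF \<open>herm N C\<close>] by simp
    qed
  qed
  moreover have "qform N (mpower N D 1) x = qform N D x"
    by (intro qform_cong mpower_1)
  ultimately show "qform N (\<lambda>a b. (if a = b then 1 else 0) + of_real s * mpower N C 2 a b) x
      \<le> qform N (mexp N (\<lambda>a b. of_real s * mpower N C 2 a b)) x"
    by (simp only: qform_add qform_scale scaleR_conv_of_real D_def mpower.simps(1))
qed

theorem expectation_mexp_loewner_le:
  fixes B :: "'a \<Rightarrow> nat \<Rightarrow> nat \<Rightarrow> complex"
  assumes "prob_space M"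
    and "herm N C"
    and "\<And>\<omega>. \<omega> \<in> space M \<Longrightarrow> herm N (B \<omega>)"
    and "\<And>n a b. a < N \<Longrightarrow> b < N \<Longrightarrow> integrable M (\<lambda>\<omega>. mpower N (B \<omega>) n a b)"
    and "\<And>a b. a < N \<Longrightarrow> b < N \<Longrightarrow> (LINT \<omega>|M. B \<omega> a b) = 0"
    and "\<And>k. 2 \<le> k \<Longrightarrow> loewner_le N (\<lambda>a b. LINT \<omega>|M. mpower N (B \<omega>) k a b)
                                 (\<lambda>a b. of_real (fact k / 2) * mpower N C 2 a b)"
    and "0 < t" "t < 1"
  shows "loewner_le N (\<lambda>a b. LINT \<omega>|M. mexp N (\<lambda>a b. of_real t * B \<omega> a b) a b)
                      (mexp N (\<lambda>a b. of_real (t\<^sup>2 / (2 * (1 - t))) * mpower N C 2 a b))"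
  using assms
  by (intro loewner_le_trans[OF loewner_le_expectation_mexp loewner_le_id_plus_mexp]) auto

section \<open>Block circulant matrices\<close>

definition bcirc_fun :: "nat \<Rightarrow> nat \<Rightarrow> tensor \<Rightarrow> nat \<Rightarrow> nat \<Rightarrow> complex"
  where "bcirc_fun m p T a b = T (a mod m) (b mod m) ((a div m + p - b div m) mod p)"

lemma index_bcirc: "a < m * p \<Longrightarrow> b < m * p \<Longrightarrow> bcirc m m p T $$ (a, b) = bcirc_fun m p T a b"
  by (simp add: bcirc_def bcirc_fun_def)

text \<open>For \<open>a, b < p\<close> the natural number \<open>(a + p - b) mod p\<close> is the residue of \<open>a - b\<close>;
  these are the slice indices of \<^const>\<open>bcirc\<close>.\<close>

lemma of_nat_cyclic_sub:
  fixes a b p :: nat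
  assumes "b \<le> p"
  shows "int ((a + p - b) mod p) = (int a - int b) mod int p"
proof -
  have "int (a + p - b) = (int a - int b) + int p" using assms by simp
  then show ?thesis by (simp add: zmod_int)
qed

lemma cyclic_sub_eq_0_iff:
  fixes a b p :: nat
  assumes "a < p" "b < p"
  shows "(a + p - b) mod p = 0 \<longleftrightarrow> a = b"
  using assms by (cases "b \<le> a") (auto simp: mod_if)

lemma cyclic_sub_add_cancel:
  fixes a b p :: nat
  assumes "a < p" "b < p"
  shows "((a + p - b) mod p + b) mod p = a"
  using assms by (simp add: mod_add_left_eq)

lemma cyclic_add_sub_cancel:
  fixes a b p :: nat
  assumes "a < p" "b < p"
  shows "((a + b) mod p + p - b) mod p = a"
  using assms by (cases "a + b < p") (simp_all add: mod_if)

lemma cyclic_sub_sub_cancel: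
  fixes a b c p :: nat
  assumes "a < p" "b < p" "c < p"
  shows "((a + p - c) mod p + p - (b + p - c) mod p) mod p = (a + p - b) mod p"
proof -
  have "int (((a + p - c) mod p + p - (b + p - c) mod p) mod p)
      = ((int a - int c) mod int p - (int b - int c) mod int p) mod int p"
    using assms by (simp add: of_nat_cyclic_sub mod_le_divisor)
  also have "\<dots> = int ((a + p - b) mod p)"
    using assms by (simp add: of_nat_cyclic_sub mod_diff_left_eq mod_diff_right_eq)
  finally show ?thesis by simp
qed

lemma cyclic_sub_swap:
  fixes a b p :: nat
  assumes "a < p" "b < p"
  shows "(p - (b + p - a) mod p) mod p = (a + p - b) mod p"
proof -
  have "int ((0 + p - (b + p - a) mod p) mod p) = (- ((int b - int a) mod int p)) mod int p"
    using assms by (simp only: of_nat_cyclic_sub mod_le_divisor) simp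
  also have "\<dots> = int ((a + p - b) mod p)"
    using assms by (simp add: of_nat_cyclic_sub mod_minus_eq)
  finally show ?thesis by simp
qed

lemma sum_lessThan_mult:
  fixes h :: "nat \<Rightarrow> 'b::comm_monoid_add"
  shows "(\<Sum>c<m * p. h c) = (\<Sum>u<p. \<Sum>v<m. h (u * m + v))"
proof -
  have "(\<Sum>c<m * p. h c) = (\<Sum>u<p. \<Sum>c\<in>{u * m..<u * m + m}. h c)"
    by (simp only: sum.nat_group mult.commute)
  also have "\<dots> = (\<Sum>u<p. \<Sum>v<m. h (u * m + v))"
    using sum.atLeastLessThan_shift_0[of h "u * m" "u * m + m" for u]
    by (simp add: lessThan_atLeast0 comp_def)
  finally show ?thesis .
qed

lemma bcirc_fun_tid:
  assumes "a < m * p" "b < m * p"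
  shows "bcirc_fun m p tid a b = (if a = b then 1 else 0)"
proof -
  have "a div m < p" "b div m < p"
    using assms by (simp_all add: less_mult_imp_div_less mult.commute)
  then have "(a div m + p - b div m) mod p = 0 \<and> a mod m = b mod m \<longleftrightarrow> a = b"
    by (metis cyclic_sub_eq_0_iff div_mult_mod_eq)
  then show ?thesis by (simp add: bcirc_fun_def tid_def)
qed

lemma index_mult_bcirc:
  assumes "a < m * p" "b < m * p"
  shows "(bcirc m m p S * bcirc m m p T) $$ (a, b) = mmult (m * p) (bcirc_fun m p S) (bcirc_fun m p T) a b"
  using assms
  by (simp add: bcirc_def scalar_prod_def mmult_def index_bcirc[symmetric] lessThan_atLeast0)

text \<open>The product of two block circulant matrices is block circulant: its entry \<open>(a, b)\<close>
  reappears in the first block column.\<close>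

lemma mmult_bcirc_fun_first_block_column:
  assumes "a < m * p" "b < m * p"
  shows "mmult (m * p) (bcirc_fun m p S) (bcirc_fun m p T) a b
       = mmult (m * p) (bcirc_fun m p S) (bcirc_fun m p T)
           (((a div m + p - b div m) mod p) * m + a mod m) (b mod m)"
proof -
  define r s g where "r = a div m" and "s = b div m" and "g = (r + p - s) mod p"
  have "0 < m" "0 < p" using assms by (auto intro: gr0I)
  have "r < p" "s < p" "g < p"
    using assms \<open>0 < p\<close> by (simp_all add: r_def s_def g_def less_mult_imp_div_less mult.commute)
  have "mmult (m * p) (bcirc_fun m p S) (bcirc_fun m p T) a b
      = (\<Sum>v<m. \<Sum>u<p. S (a mod m) v ((r + p - u) mod p) * T v (b mod m) ((u + p - s) mod p))"
    unfolding mmult_def sum_lessThan_mult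
    by (subst sum.swap) (simp add: bcirc_fun_def r_def s_def \<open>0 < m\<close>)
  also have "\<dots> = (\<Sum>v<m. \<Sum>w<p. S (a mod m) v ((g + p - w) mod p) * T v (b mod m) w)"
    using \<open>r < p\<close> \<open>s < p\<close>
    by (intro sum.cong[OF refl] sum.reindex_bij_witness[of _ "\<lambda>w. (w + s) mod p" "\<lambda>u. (u + p - s) mod p"])
      (auto simp: g_def cyclic_sub_add_cancel cyclic_add_sub_cancel cyclic_sub_sub_cancel)
  also have "\<dots> = mmult (m * p) (bcirc_fun m p S) (bcirc_fun m p T) (g * m + a mod m) (b mod m)"
    unfolding mmult_def sum_lessThan_mult
    by (subst sum.swap) (simp add: bcirc_fun_def \<open>0 < m\<close> \<open>g < p\<close>)
  finally show ?thesis by (simp add: g_def r_def s_def)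
qed

lemma bcirc_fun_tpow:
  assumes "a < m * p" "b < m * p"
  shows "bcirc_fun m p (tpow m p T n) a b = mpower (m * p) (bcirc_fun m p T) n a b"
  using assms
proof (induction n arbitrary: a b)
  case 0
  then show ?case by (simp add: bcirc_fun_tid)
next
  case (Suc n)
  define g where "g = (a div m + p - b div m) mod p"
  have "0 < m" "0 < p" using Suc.prems by (auto intro: gr0I)
  have "g * m + a mod m < m * p"
  proof -
    have "g * m + a mod m < (g + 1) * m" using \<open>0 < m\<close> by simp
    also have "\<dots> \<le> p * m" using \<open>0 < p\<close> by (intro mult_le_mono1) (simp add: g_def Suc_leI)
    also have "\<dots> = m * p" by simp
    finally show ?thesis .
  qed
  moreover have "b mod m < m * p"
    using Suc.prems(2) mod_less_eq_dividend[of b m] by linarith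
  ultimately have "bcirc_fun m p (tpow m p T (Suc n)) a b
      = mmult (m * p) (bcirc_fun m p (tpow m p T n)) (bcirc_fun m p T) (g * m + a mod m) (b mod m)"
    by (simp add: bcirc_fun_def tprod_def unbcirc_def index_mult_bcirc[symmetric] g_def)
  also have "\<dots> = mmult (m * p) (bcirc_fun m p (tpow m p T n)) (bcirc_fun m p T) a b"
    unfolding g_def by (rule mmult_bcirc_fun_first_block_column[OF Suc.prems, symmetric])
  also have "\<dots> = mpower (m * p) (bcirc_fun m p T) (Suc n) a b"
    using Suc by (simp add: mmult_def)
  finally show ?case .
qed

lemma herm_bcirc_fun:
  assumes "thermitian m p T"
  shows "herm (m * p) (bcirc_fun m p T)"
  unfolding herm_def
proof (intro allI impI)
  fix a b assume "a < m * p" "b < m * p"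
  then have "0 < m" "a div m < p" "b div m < p"
    by (auto intro: gr0I simp: less_mult_imp_div_less mult.commute)
  define k where "k = (b div m + p - a div m) mod p"
  have "k < p" using \<open>a div m < p\<close> by (simp add: k_def)
  then have "cnj (T (a mod m) (b mod m) ((p - k) mod p)) = T (b mod m) (a mod m) k"
    using assms \<open>0 < m\<close> unfolding thermitian_def tH_def by simp
  then show "bcirc_fun m p T b a = cnj (bcirc_fun m p T a b)"
    using \<open>a div m < p\<close> \<open>b div m < p\<close> by (auto simp: bcirc_fun_def k_def cyclic_sub_swap)
qed

lemma bcirc_fun_tscale: "bcirc_fun m p (tscale c T) = (\<lambda>a b. of_real c * bcirc_fun m p T a b)"
  by (simp add: fun_eq_iff bcirc_fun_def tscale_def)

lemma bcirc_fun_texpect: "bcirc_fun m p (texpect M Y) a b = (LINT \<omega>|M. bcirc_fun m p (Y \<omega>) a b)"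
  by (simp add: bcirc_fun_def texpect_def)

lemma bcirc_fun_texp:
  "a < m * p \<Longrightarrow> b < m * p \<Longrightarrow> bcirc_fun m p (texp m p T) a b = mexp (m * p) (bcirc_fun m p T) a b"
  by (simp add: bcirc_fun_def texp_def mexp_def bcirc_fun_tpow[symmetric])

lemma tle_iff_loewner_le: "tle m p S T \<longleftrightarrow> loewner_le (m * p) (bcirc_fun m p S) (bcirc_fun m p T)"
proof -
  let ?N = "m * p"
  have q: "(\<Sum>i<?N. \<Sum>j<?N. cnj (v $ i) * bcirc m m p (\<lambda>i j k. T i j k - S i j k) $$ (i, j) * v $ j)
      = qform ?N (bcirc_fun m p T) (\<lambda>i. v $ i) - qform ?N (bcirc_fun m p S) (\<lambda>i. v $ i)" for v
    unfolding qform_def sum_subtractf[symmetric]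
    by (intro sum.cong refl) (simp add: index_bcirc bcirc_fun_def algebra_simps)
  have vec: "qform ?N F (\<lambda>i. vec ?N x $ i) = qform ?N F x" for F x
    unfolding qform_def by (intro sum.cong refl) simp
  have "tle m p S T \<longleftrightarrow> (\<forall>v\<in>carrier_vec ?N.
      qform ?N (bcirc_fun m p S) (\<lambda>i. v $ i) \<le> qform ?N (bcirc_fun m p T) (\<lambda>i. v $ i))"
    unfolding tle_def psd_def Let_def q by (auto simp: bcirc_def less_eq_complex_def)
  also have "\<dots> \<longleftrightarrow> loewner_le ?N (bcirc_fun m p S) (bcirc_fun m p T)"
    unfolding loewner_le_def by (metis vec vec_carrier)
  finally show ?thesis .
qed

lemma bcirc_fun_entry:
  assumes "a < m * p" "b < m * p"
  obtains i j k where "i < m" "j < m" "k < p" "\<And>T. bcirc_fun m p T a b = T i j k"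
proof -
  have "0 < m" "0 < p" using assms by (auto intro: gr0I)
  then show ?thesis by (intro that[of "a mod m" "b mod m" "(a div m + p - b div m) mod p"])
    (simp_all add: bcirc_fun_def)
qed

lemma integrable_mpower_bcirc_fun:
  assumes "prob_space M"
    and "\<forall>k\<ge>1. \<forall>i<m. \<forall>j<m. \<forall>l<p. integrable M (\<lambda>\<omega>. tpow m p (X \<omega>) k i j l)"
    and "a < m * p" "b < m * p"
  shows "integrable M (\<lambda>\<omega>. mpower (m * p) (bcirc_fun m p (X \<omega>)) n a b)"
proof (cases n)
  case 0
  interpret prob_space M by fact
  show ?thesis using 0 by simp
next
  case (Suc k)
  obtain i j l where "i < m" "j < m" "l < p" "\<And>T. bcirc_fun m p T a b = T i j l"
    using bcirc_fun_entry[OF assms(3,4)] by blast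
  then have "integrable M (\<lambda>\<omega>. bcirc_fun m p (tpow m p (X \<omega>) n) a b)"
    using assms(2) Suc by (simp del: tpow.simps)
  then show ?thesis by (simp only: bcirc_fun_tpow[OF assms(3,4)])
qed

theorem lemma6:
  fixes m p :: nat and A :: tensor and M :: "'a measure" and X :: "'a \<Rightarrow> tensor" and t :: real
  assumes "prob_space M"
    and "thermitian m p A"
    and "\<forall>\<omega>\<in>space M. thermitian m p (X \<omega>)"
    and "\<forall>k\<ge>1. \<forall>i<m. \<forall>j<m. \<forall>l<p. integrable M (\<lambda>\<omega>. tpow m p (X \<omega>) k i j l)"
    and "\<forall>i<m. \<forall>j<m. \<forall>l<p. texpect M X i j l = tzero i j l"
    and "\<forall>k\<ge>2. tle m p (texpect M (\<lambda>\<omega>. tpow m p (X \<omega>) k))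
                       (tscale (fact k / 2) (tpow m p A 2))"
    and "0 < t" and "t < 1"
  shows "tle m p (texpect M (\<lambda>\<omega>. texp m p (tscale t (X \<omega>))))
                 (texp m p (tscale (t\<^sup>2 / (2 * (1 - t))) (tpow m p A 2)))"
proof -
  interpret prob_space M by fact
  define N B C where "N = m * p" and "B \<omega> = bcirc_fun m p (X \<omega>)" and "C = bcirc_fun m p A" for \<omega>
  have tpow: "bcirc_fun m p (tpow m p T n) a b = mpower N (bcirc_fun m p T) n a b"
    if "a < N" "b < N" for T n a b
    using that unfolding N_def by (rule bcirc_fun_tpow)
  have "loewner_le N (\<lambda>a b. LINT \<omega>|M. mexp N (\<lambda>a b. of_real t * B \<omega> a b) a b)
      (mexp N (\<lambda>a b. of_real (t\<^sup>2 / (2 * (1 - t))) * mpower N C 2 a b))"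
  proof (rule expectation_mexp_loewner_le)
    show "(LINT \<omega>|M. B \<omega> a b) = 0" if ab: "a < N" "b < N" for a b
    proof -
      obtain i j l where "i < m" "j < m" "l < p" "\<And>T. bcirc_fun m p T a b = T i j l"
        using bcirc_fun_entry[OF ab[unfolded N_def]] by blast
      then show ?thesis using assms(5) by (simp add: B_def tzero_def texpect_def)
    qed
    show "loewner_le N (\<lambda>a b. LINT \<omega>|M. mpower N (B \<omega>) k a b)
        (\<lambda>a b. of_real (fact k / 2) * mpower N C 2 a b)" if "2 \<le> k" for k
      using assms(6) that unfolding tle_iff_loewner_le N_def[symmetric]
      by (auto simp: B_def C_def bcirc_fun_texpect bcirc_fun_tscale tpow cong: loewner_le_cong)
  qed (use assms herm_bcirc_fun integrable_mpower_bcirc_fun in \<open>auto simp: N_def B_def C_def\<close>)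
  moreover have "(LINT \<omega>|M. mexp N (\<lambda>a b. of_real t * B \<omega> a b) a b)
      = bcirc_fun m p (texpect M (\<lambda>\<omega>. texp m p (tscale t (X \<omega>)))) a b"
    if "a < N" "b < N" for a b
    using that by (simp add: bcirc_fun_texpect bcirc_fun_texp bcirc_fun_tscale B_def N_def)
  moreover have "mexp N (\<lambda>a b. of_real (t\<^sup>2 / (2 * (1 - t))) * mpower N C 2 a b) a b
      = bcirc_fun m p (texp m p (tscale (t\<^sup>2 / (2 * (1 - t))) (tpow m p A 2))) a b"
    if "a < N" "b < N" for a b
    using that
    by (simp only: bcirc_fun_texp[of _ m p, folded N_def] bcirc_fun_tscale)
      (rule mexp_cong, simp_all only: tpow C_def)
  ultimately show ?thesis
    unfolding tle_iff_loewner_le N_def[symmetric] by (rule loewner_le_cong[THEN iffD1, rotated 2])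
qed

end
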